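(* Let $n\ge 1$. For $\alpha=(a_n,\ldots,a_1)$ ranging over restricted sequences of length $n$, let $e'_\alpha\in V_n$ be the elements defined recursively below. Then $\{e'_\alpha\}$ is an orthogonal basis of $V_n$ for the Markov form, and more precisely: (i) $\langle e'_\alpha,e'_\alpha\rangle_n=\dfrac{\Delta_{a_n}}{\Delta_{a_n-1}}\cdots\dfrac{\Delta_{a_1}}{\Delta_{a_1-1}}$; (ii) if $\beta\neq\alpha$ are restricted sequences of length $n$, then $\langle e'_\beta,e'_\alpha\rangle_n=0$.
   Context: A non-crossing $n$-chord diagram is (the isotopy class of) a set of $n$ pairwise disjoint arcs in the closed upper half-plane with endpoints at $1,2,\ldots,2n$ on the real line; equivalently a non-crossing perfect matching of $\{1,\ldots,2n\}$. Let $D_n$ be the set of these ($D_0=\{\phi\}$, the empty diagram). For $1\le k\le 2n+1$, $l_k:D_n\to D_{n+1}$ inserts a new innermost arc: in matching terms, $l_k(\alpha)$ matches $k$ with $k+1$, and each old point $i$ becomes $i$ if $i<k$ and $i+2$ if $i\ge k$, with the old pairs kept. For $\alpha\in D_n$ ($n\ge1$) let $k_n$ be the smallest $k$ with $k$ matched to $k+1$ in $\alpha$, and let $\alpha'\in D_{n-1}$ be $\alpha$ with that arc removed (points renumbered order-preservingly), so $\alpha=l_{k_n}(\alpha')$. The restricted sequence of $\alpha$ is $(k_n,k_{n-1},\ldots,k_1)$ where $(k_{n-1},\ldots,k_1)$ is the restricted sequence of $\alpha'$ (the empty sequence for $\phi$). This gives a bijection between $D_n$ and restricted sequences of length $n$;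 write $e_{(a_n,\ldots,a_1)}$ for the diagram with restricted sequence $(a_n,\ldots,a_1)$. Let $q$ be an indeterminate and $V_n$ the $\mathbb{Q}(q)$-vector space with basis $D_n$; extend $l_k$ linearly. The Markov form $\langle\ ,\ \rangle_n$ on $V_n$ is the bilinear extension of $\langle\alpha,\beta\rangle_n=q^{c}$, where $c$ is the number of closed curves obtained by gluing $\alpha$ (in the upper half-plane) to the reflection of $\beta$ in the real axis (in the lower half-plane) along the common endpoints $1,\ldots,2n$. Chebyshev polynomials: $\Delta_{-1}=0$, $\Delta_0=1$, $\Delta_k=q\Delta_{k-1}-\Delta_{k-2}$ for $k\ge1$. The elements $e'_\alpha$: $e'_{(1)}=e_{(1)}$, and for a restricted sequence $(a_n,\ldots,a_1)$ with $n\ge2$, $e'_{(a_n,\ldots,a_1)}=l_{a_n}\big(e'_{(a_{n-1},\ldots,a_1)}\big)-\frac{\Delta_{a_n-2}}{\Delta_{a_n-1}}\,e'_{(a_n-1,a_{n-1},\ldots,a_1)}$ if $a_n\ge2$, and $e'_{(1,a_{n-1},\ldots,a_1)}=l_1\big(e'_{(a_{n-1},\ldots,a_1)}\big)$. *)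

theory Defs
  imports "HOL-Computational_Algebra.Polynomial" "HOL-Computational_Algebra.Fraction_Field"
begin

type_synonym K = "rat poly fract"

definition qq :: K where "qq = Fract [:0, 1:] 1"

text \<open>Chebyshev polynomials Delta_k for k >= 0 (Delta_{-1} = 0 gives Delta_1 = q).\<close>
fun Delta :: "nat \<Rightarrow> K" where
  "Delta 0 = 1"
| "Delta (Suc 0) = qq"
| "Delta (Suc (Suc k)) = qq * Delta (Suc k) - Delta k"

text \<open>A chord diagram is represented by its set of arcs (i,j), i<j.\<close>
type_synonym diagram = "(nat \<times> nat) set"

definition D :: "nat \<Rightarrow> diagram set" where
  "D n = {\<alpha>. \<alpha> \<subseteq> {1..2*n} \<times> {1..2*n}
            \<and> (\<forall>(i,j)\<in>\<alpha>. i < j)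
            \<and> (\<forall>x\<in>{1..2*n}. \<exists>!p. p \<in> \<alpha> \<and> (fst p = x \<or> snd p = x))
            \<and> (\<forall>(a,b)\<in>\<alpha>. \<forall>(c,d)\<in>\<alpha>. \<not> (a < c \<and> c < b \<and> b < d))}"

definition l :: "nat \<Rightarrow> diagram \<Rightarrow> diagram" where
  "l k \<alpha> = insert (k, Suc k)
     ((\<lambda>(i,j). (if i < k then i else i + 2, if j < k then j else j + 2)) ` \<alpha>)"

definition kmin :: "diagram \<Rightarrow> nat" where
  "kmin \<alpha> = (LEAST k. (k, Suc k) \<in> \<alpha>)"

definition remove_arc :: "diagram \<Rightarrow> nat \<Rightarrow> diagram" where
  "remove_arc \<alpha> k = (\<lambda>(i,j). (if i < k then i else i - 2, if j < k then j else j - 2))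
                       ` (\<alpha> - {(k, Suc k)})"

text \<open>Restricted sequence (k_n, ..., k_1) of a diagram in D_n, as a list with head k_n.\<close>
fun rseq :: "nat \<Rightarrow> diagram \<Rightarrow> nat list" where
  "rseq 0 \<alpha> = []"
| "rseq (Suc n) \<alpha> = kmin \<alpha> # rseq n (remove_arc \<alpha> (kmin \<alpha>))"

definition RS :: "nat \<Rightarrow> nat list set" where
  "RS n = rseq n ` D n"

text \<open>Vectors of V_n: functions from diagrams to K (supported on D n).\<close>
type_synonym vec = "diagram \<Rightarrow> K"

definition delta :: "diagram \<Rightarrow> vec" where
  "delta \<alpha> = (\<lambda>\<beta>. if \<beta> = \<alpha> then 1 else 0)"

definition lin_l :: "nat \<Rightarrow> nat \<Rightarrow> vec \<Rightarrow> vec" where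
  "lin_l n k v = (\<lambda>\<beta>. \<Sum>\<alpha>\<in>D n. if l k \<alpha> = \<beta> then v \<alpha> else 0)"

text \<open>Number of closed curves obtained by gluing alpha and reflected beta.\<close>
definition loops :: "nat \<Rightarrow> diagram \<Rightarrow> diagram \<Rightarrow> nat" where
  "loops n \<alpha> \<beta> = card ({1..2*n} // (((\<alpha> \<union> \<beta>) \<union> (\<alpha> \<union> \<beta>)\<inverse>)\<^sup>*))"

definition markov :: "nat \<Rightarrow> vec \<Rightarrow> vec \<Rightarrow> K" where
  "markov n v w = (\<Sum>\<alpha>\<in>D n. \<Sum>\<beta>\<in>D n. v \<alpha> * w \<beta> * qq ^ loops n \<alpha> \<beta>)"

text \<open>The elements e'_alpha, indexed by lists [a_n, ..., a_1].\<close>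
function ep :: "nat list \<Rightarrow> vec" where
  "ep [] = delta {}"
| "ep (a # as) =
     (if as = [] then delta {(1, 2)}
      else if 2 \<le> a then
        (\<lambda>\<beta>. lin_l (length as) a (ep as) \<beta>
              - (Delta (a - 2) / Delta (a - 1)) * ep ((a - 1) # as) \<beta>)
      else lin_l (length as) 1 (ep as))"
  by pat_completeness auto
termination
  by (relation "measure (\<lambda>s. sum_list s + length s)") auto

end

theory Submission
  imports Defs "HOL-Library.Function_Algebras"
begin

text \<open>
  Gluing a cap onto the points \<open>k, k + 1\<close> of a diagram \<open>b\<close> either closes a loop, when
  \<open>(k, k + 1)\<close> is an arc of \<open>b\<close>, or joins two strands. Hence the transpose of \<open>l k\<close> for the
  Markov form is capping: \<open>\<langle>l k x, b\<rangle> = q\<^sup>\<epsilon> \<langle>x, cap k b\<rangle>\<close> with \<open>\<epsilon> = 1\<close> iff \<open>(k, k + 1) \<in> b\<close>.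
  Capping an inserted arc gives back the diagram (\<open>cap k\<close> after \<open>l k\<close>, \<open>cap (k + 1)\<close> after
  \<open>l k\<close>, \<open>cap k\<close> after \<open>l (k + 1)\<close>), and caps and insertions two or more apart commute.
  With these rules an induction on \<open>n\<close> shows, for every matching \<open>g\<close> and \<open>\<alpha> = a\<^sub>n # \<alpha>'\<close>,
  \<open>\<langle>e'(\<alpha>), l j g\<rangle> = 0\<close> for \<open>j < a\<^sub>n\<close> and \<open>\<langle>e'(\<alpha>), l a\<^sub>n g\<rangle> = \<Delta>(a\<^sub>n) / \<Delta>(a\<^sub>n - 1) \<cdot> \<langle>e'(\<alpha>'), g\<rangle>\<close>.
  Expanding \<open>e'(\<beta>)\<close> by its recursion then yields orthogonality and the norms.
  Restricted sequences are in bijection with \<open>D n\<close>, so the \<open>e'(\<alpha>)\<close> are \<open>dim V\<^sub>n\<close> orthogonal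
  vectors of nonzero norm, hence a basis.
\<close>

section \<open>Perfect matchings and the insertion maps\<close>

definition shift_up :: "nat \<Rightarrow> nat \<Rightarrow> nat" where
  "shift_up k u = (if u < k then u else u + 2)"

definition shift_down :: "nat \<Rightarrow> nat \<Rightarrow> nat" where
  "shift_down k u = (if u < k then u else u - 2)"

lemma shift_down_shift_up [simp]: "shift_down k (shift_up k u) = u"
  by (simp add: shift_up_def shift_down_def)

lemma shift_up_shift_down [simp]: "u \<noteq> k \<Longrightarrow> u \<noteq> Suc k \<Longrightarrow> shift_up k (shift_down k u) = u"
  by (auto simp: shift_up_def shift_down_def)

lemma shift_up_neq [simp]: "shift_up k u \<noteq> k" "shift_up k u \<noteq> Suc k"
  by (auto simp: shift_up_def)

lemma shift_up_eq_iff [simp]: "shift_up k u = shift_up k v \<longleftrightarrow> u = v"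
  by (auto simp: shift_up_def)

lemma shift_up_less_iff [simp]: "shift_up k u < shift_up k v \<longleftrightarrow> u < v"
  by (auto simp: shift_up_def)

lemma shift_down_eq_iff:
  "u \<notin> {k, Suc k} \<Longrightarrow> v \<notin> {k, Suc k} \<Longrightarrow> shift_down k u = shift_down k v \<longleftrightarrow> u = v"
  by (auto simp: shift_down_def)

lemma shift_down_less_iff:
  "u \<notin> {k, Suc k} \<Longrightarrow> v \<notin> {k, Suc k} \<Longrightarrow> shift_down k u < shift_down k v \<longleftrightarrow> u < v"
  by (auto simp: shift_down_def)

lemma shift_up_in_points:
  "u \<in> {1..2*m} \<Longrightarrow> 1 \<le> k \<Longrightarrow> k \<le> 2*m+1 \<Longrightarrow> shift_up k u \<in> {1..2*Suc m}"
  by (auto simp: shift_up_def)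

lemma shift_up_in_pointsD:
  "shift_up k u \<in> {1..2*Suc m} \<Longrightarrow> 1 \<le> k \<Longrightarrow> k \<le> 2*m+1 \<Longrightarrow> u \<in> {1..2*m}"
  by (auto simp: shift_up_def split: if_splits)

lemma shift_down_in_points:
  "u \<in> {1..2*Suc m} \<Longrightarrow> u \<notin> {k, Suc k} \<Longrightarrow> 1 \<le> k \<Longrightarrow> k \<le> 2*m+1 \<Longrightarrow>
     shift_down k u \<in> {1..2*m}"
  by (auto simp: shift_down_def)

lemma shift_down_image:
  assumes "1 \<le> k" "k \<le> 2*m+1"
  shows "shift_down k ` ({1..2*Suc m} - {k, Suc k}) = {1..2*m}"
proof
  show "shift_down k ` ({1..2*Suc m} - {k, Suc k}) \<subseteq> {1..2*m}"
    using shift_down_in_points assms by blast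
  show "{1..2*m} \<subseteq> shift_down k ` ({1..2*Suc m} - {k, Suc k})"
  proof
    fix w assume "w \<in> {1..2*m}"
    then have "shift_up k w \<in> {1..2*Suc m} - {k, Suc k}"
      using shift_up_in_points assms by auto
    then show "w \<in> shift_down k ` ({1..2*Suc m} - {k, Suc k})"
      by (metis shift_down_shift_up imageI)
  qed
qed

definition joined :: "diagram \<Rightarrow> nat \<Rightarrow> nat \<Rightarrow> bool" where
  "joined a u v \<longleftrightarrow> (u, v) \<in> a \<or> (v, u) \<in> a"

lemma joined_sym: "joined a u v \<longleftrightarrow> joined a v u"
  by (auto simp: joined_def)

lemma mem_l_iff:
  "(u, v) \<in> l k a \<longleftrightarrow>
     (u = k \<and> v = Suc k) \<or>
     (u \<notin> {k, Suc k} \<and> v \<notin> {k, Suc k} \<and> (shift_down k u, shift_down k v) \<in> a)"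
proof -
  have "l k a = insert (k, Suc k) ((\<lambda>(i, j). (shift_up k i, shift_up k j)) ` a)"
    by (simp add: l_def shift_up_def)
  moreover have "(u, v) \<in> (\<lambda>(i, j). (shift_up k i, shift_up k j)) ` a \<longleftrightarrow>
      u \<notin> {k, Suc k} \<and> v \<notin> {k, Suc k} \<and> (shift_down k u, shift_down k v) \<in> a"
  proof
    assume "(u, v) \<in> (\<lambda>(i, j). (shift_up k i, shift_up k j)) ` a"
    then obtain i j where "(i, j) \<in> a" "u = shift_up k i" "v = shift_up k j" by auto
    then show "u \<notin> {k, Suc k} \<and> v \<notin> {k, Suc k} \<and> (shift_down k u, shift_down k v) \<in> a"
      by auto
  next
    assume h: "u \<notin> {k, Suc k} \<and> v \<notin> {k, Suc k} \<and> (shift_down k u, shift_down k v) \<in> a"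
    then have "(u, v) = (shift_up k (shift_down k u), shift_up k (shift_down k v))" by simp
    with h show "(u, v) \<in> (\<lambda>(i, j). (shift_up k i, shift_up k j)) ` a" by force
  qed
  ultimately show ?thesis by auto
qed

lemma joined_l_iff:
  "joined (l k a) u v \<longleftrightarrow> (u = k \<and> v = Suc k) \<or> (u = Suc k \<and> v = k) \<or>
     (u \<notin> {k, Suc k} \<and> v \<notin> {k, Suc k} \<and> joined a (shift_down k u) (shift_down k v))"
  unfolding joined_def mem_l_iff by auto

lemma joined_l_new_arc: "joined (l k g) k v \<longleftrightarrow> v = Suc k" "joined (l k g) (Suc k) v \<longleftrightarrow> v = k"
  by (auto simp: joined_l_iff)

lemma joined_l_old_point:
  "u \<notin> {k, Suc k} \<Longrightarrow>
     joined (l k g) u v \<longleftrightarrow> v \<notin> {k, Suc k} \<and> joined g (shift_down k u) (shift_down k v)"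
  by (auto simp: joined_l_iff)

lemma joined_l_shift_up [simp]: "joined (l k a) (shift_up k u) (shift_up k v) \<longleftrightarrow> joined a u v"
  by (simp add: joined_l_iff)

definition matching_on :: "nat set \<Rightarrow> diagram \<Rightarrow> bool" where
  "matching_on S a \<longleftrightarrow> (\<forall>(u, v)\<in>a. u < v) \<and> (\<forall>u v. joined a u v \<longrightarrow> u \<in> S)
     \<and> (\<forall>u\<in>S. \<exists>v. joined a u v) \<and> (\<forall>u v w. joined a u v \<longrightarrow> joined a u w \<longrightarrow> v = w)"

definition matchings :: "nat \<Rightarrow> diagram set" where
  "matchings n = {a. matching_on {1..2*n} a}"

definition noncrossing :: "diagram \<Rightarrow> bool" where
  "noncrossing a \<longleftrightarrow> (\<forall>(i, j)\<in>a. \<forall>(i', j')\<in>a. \<not> (i < i' \<and> i' < j \<and> j < j'))"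

lemma matching_onI:
  assumes "\<And>u v. (u, v) \<in> a \<Longrightarrow> u < v" "\<And>u v. joined a u v \<Longrightarrow> u \<in> S"
    "\<And>u. u \<in> S \<Longrightarrow> \<exists>v. joined a u v" "\<And>u v w. joined a u v \<Longrightarrow> joined a u w \<Longrightarrow> v = w"
  shows "matching_on S a"
  using assms unfolding matching_on_def by blast

lemma matching_on_less: "matching_on S a \<Longrightarrow> (u, v) \<in> a \<Longrightarrow> u < v"
  by (auto simp: matching_on_def)

lemma matching_on_joined_mem: "matching_on S a \<Longrightarrow> joined a u v \<Longrightarrow> u \<in> S \<and> v \<in> S"
  unfolding matching_on_def using joined_sym by blast

lemma matching_on_joined_neq: "matching_on S a \<Longrightarrow> joined a u v \<Longrightarrow> u \<noteq> v"
  unfolding matching_on_def joined_def by blast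

lemma matching_on_partner: "matching_on S a \<Longrightarrow> u \<in> S \<Longrightarrow> \<exists>v. joined a u v"
  by (simp add: matching_on_def)

lemma matching_on_partner_unique:
  "matching_on S a \<Longrightarrow> joined a u v \<Longrightarrow> joined a u w \<Longrightarrow> v = w"
  unfolding matching_on_def by blast

lemma perfect_matching_imp_matching_on:
  assumes sub: "a \<subseteq> S \<times> S" and ord: "\<forall>(i, j)\<in>a. i < j"
    and ex1: "\<forall>x\<in>S. \<exists>!p. p \<in> a \<and> (fst p = x \<or> snd p = x)"
  shows "matching_on S a"
proof (rule matching_onI)
  show "u < v" if "(u, v) \<in> a" for u v using ord that by blast
  show "u \<in> S" if "joined a u v" for u v using sub that by (auto simp: joined_def)
  show "\<exists>v. joined a u v" if u: "u \<in> S" for u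
  proof -
    obtain p where "p \<in> a" "fst p = u \<or> snd p = u" using ex1 u by blast
    then show ?thesis by (cases p) (auto simp: joined_def)
  qed
  show "v = w" if uv: "joined a u v" and uw: "joined a u w" for u v w
  proof -
    obtain p where p: "p \<in> a" "p = (u, v) \<or> p = (v, u)" using uv unfolding joined_def by blast
    obtain q where q: "q \<in> a" "q = (u, w) \<or> q = (w, u)" using uw unfolding joined_def by blast
    have "u \<in> S" using sub p by auto
    then have "\<exists>!p. p \<in> a \<and> (fst p = u \<or> snd p = u)" using ex1 by blast
    moreover have "p \<in> a \<and> (fst p = u \<or> snd p = u)" "q \<in> a \<and> (fst q = u \<or> snd q = u)"
      using p q by auto
    ultimately have "p = q" by blast
    then show ?thesis using p q by auto
  qed
qed

lemma matching_on_imp_perfect_matching: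
  assumes m: "matching_on S a"
  shows "a \<subseteq> S \<times> S \<and> (\<forall>(i, j)\<in>a. i < j) \<and> (\<forall>x\<in>S. \<exists>!p. p \<in> a \<and> (fst p = x \<or> snd p = x))"
proof -
  have "\<exists>!p. p \<in> a \<and> (fst p = x \<or> snd p = x)" if x: "x \<in> S" for x
  proof -
    obtain y where y: "joined a x y" using matching_on_partner[OF m x] by blast
    define p where "p = (if (x, y) \<in> a then (x, y) else (y, x))"
    have "p \<in> a \<and> (fst p = x \<or> snd p = x)" using y by (auto simp: p_def joined_def)
    moreover have "q = p" if q: "q \<in> a" "fst q = x \<or> snd q = x" for q
    proof -
      obtain q1 q2 where q12: "q = (q1, q2)" by (cases q)
      have "q = (x, y) \<or> q = (y, x)"
      proof (cases "q1 = x")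
        case True
        then have "joined a x q2" using q q12 by (simp add: joined_def)
        then show ?thesis using matching_on_partner_unique[OF m y] True q12 by simp
      next
        case False
        then have "q2 = x" "joined a x q1" using q q12 by (auto simp: joined_def)
        then show ?thesis using matching_on_partner_unique[OF m y] q12 by simp
      qed
      moreover have "\<not> ((x, y) \<in> a \<and> (y, x) \<in> a)"
        using matching_on_less[OF m] less_asym by blast
      ultimately show ?thesis using q(1) by (auto simp: p_def)
    qed
    ultimately show ?thesis by blast
  qed
  moreover have "a \<subseteq> S \<times> S"
    using matching_on_joined_mem[OF m] by (auto simp: joined_def)
  ultimately show ?thesis
    using matching_on_less[OF m] by blast
qed

lemma perfect_matching_iff_matching_on:
  "(a \<subseteq> S \<times> S \<and> (\<forall>(i, j)\<in>a. i < j) \<and> (\<forall>x\<in>S. \<exists>!p. p \<in> a \<and> (fst p = x \<or> snd p = x)))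
     \<longleftrightarrow> matching_on S a" (is "?pm \<longleftrightarrow> _")
proof
  assume ?pm
  then show "matching_on S a" by (elim conjE) (rule perfect_matching_imp_matching_on)
qed (rule matching_on_imp_perfect_matching)

lemma D_eq: "D n = {a. a \<in> matchings n \<and> noncrossing a}"
  unfolding D_def matchings_def noncrossing_def mem_Collect_eq
    perfect_matching_iff_matching_on[symmetric]
  by (simp only: conj_assoc)

lemma finite_D: "finite (D n)"
proof (rule finite_subset)
  show "D n \<subseteq> Pow ({1..2*n} \<times> {1..2*n})" unfolding D_def by blast
qed simp

lemma l_in_matchings:
  assumes g: "g \<in> matchings m" and k: "1 \<le> k" "k \<le> 2*m+1"
  shows "l k g \<in> matchings (Suc m)"
proof -
  have mg: "matching_on {1..2*m} g" using g by (simp add: matchings_def)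
  have "matching_on {1..2*Suc m} (l k g)"
  proof (rule matching_onI)
    show "u < v" if "(u, v) \<in> l k g" for u v
      using that matching_on_less[OF mg, of "shift_down k u" "shift_down k v"]
        shift_down_less_iff[of u k v] unfolding mem_l_iff by auto
    show "u \<in> {1..2*Suc m}" if "joined (l k g) u v" for u v
    proof (cases "u \<in> {k, Suc k}")
      case False
      then have "shift_down k u \<in> {1..2*m}"
        using that matching_on_joined_mem[OF mg] by (auto simp: joined_l_iff)
      then have "shift_up k (shift_down k u) \<in> {1..2*Suc m}" using shift_up_in_points k by blast
      then show ?thesis using False by simp
    qed (use k in auto)
    show "\<exists>v. joined (l k g) u v" if u: "u \<in> {1..2*Suc m}" for u
    proof (cases "u \<in> {k, Suc k}")
      case False
      then have "shift_down k u \<in> {1..2*m}" using shift_down_in_points u k by blast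
      then obtain w where "joined g (shift_down k u) w" using matching_on_partner[OF mg] by blast
      then have "joined (l k g) (shift_up k (shift_down k u)) (shift_up k w)" by simp
      moreover have "shift_up k (shift_down k u) = u" using False by simp
      ultimately show ?thesis by metis
    qed (auto simp: joined_l_iff)
    show "v = w" if uv: "joined (l k g) u v" and uw: "joined (l k g) u w" for u v w
    proof (cases "u \<in> {k, Suc k}")
      case False
      then have "v \<notin> {k, Suc k}" "w \<notin> {k, Suc k}"
        "joined g (shift_down k u) (shift_down k v)" "joined g (shift_down k u) (shift_down k w)"
        using uv uw unfolding joined_l_iff by auto
      then show ?thesis using matching_on_partner_unique[OF mg] shift_down_eq_iff by metis
    qed (use uv uw in \<open>auto simp: joined_l_iff\<close>)
  qed
  then show ?thesis by (simp add: matchings_def)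
qed

lemma l_in_D:
  assumes g: "g \<in> D m" and k: "1 \<le> k" "k \<le> 2*m+1"
  shows "l k g \<in> D (Suc m)"
proof -
  have "noncrossing (l k g)"
    unfolding noncrossing_def
  proof clarify
    fix a b c d assume ab: "(a, b) \<in> l k g" and cd: "(c, d) \<in> l k g" and "a < c" "c < b" "b < d"
    then have "(a, b) \<noteq> (k, Suc k)" "(c, d) \<noteq> (k, Suc k)" by auto
    then have "a \<notin> {k, Suc k}" "b \<notin> {k, Suc k}" "c \<notin> {k, Suc k}" "d \<notin> {k, Suc k}"
      "(shift_down k a, shift_down k b) \<in> g" "(shift_down k c, shift_down k d) \<in> g"
      using ab cd mem_l_iff by auto
    moreover have "noncrossing g" using g by (simp add: D_eq)
    moreover have "shift_down k a < shift_down k c" "shift_down k c < shift_down k b"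
      "shift_down k b < shift_down k d"
      using calculation(1-4) \<open>a < c\<close> \<open>c < b\<close> \<open>b < d\<close> by (simp_all add: shift_down_less_iff)
    ultimately show False unfolding noncrossing_def by blast
  qed
  then show ?thesis using l_in_matchings g k by (simp add: D_eq)
qed

section \<open>Capping\<close>

text \<open>\<open>cap k b\<close> joins the points \<open>k, k + 1\<close> of \<open>b\<close> by an arc and contracts it; the points of
  \<open>cap k b\<close> are numbered so that \<open>shift_up k\<close> maps them to the remaining points of \<open>b\<close>.\<close>
definition joined_via_cap :: "nat \<Rightarrow> diagram \<Rightarrow> nat \<Rightarrow> nat \<Rightarrow> bool" where
  "joined_via_cap k b u v \<longleftrightarrow> joined b (shift_up k u) (shift_up k v)
     \<or> joined b (shift_up k u) k \<and> joined b (shift_up k v) (Suc k)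
     \<or> joined b (shift_up k u) (Suc k) \<and> joined b (shift_up k v) k"

definition cap :: "nat \<Rightarrow> diagram \<Rightarrow> diagram" where
  "cap k b = {(u, v). u < v \<and> joined_via_cap k b u v}"

lemma joined_via_cap_sym: "joined_via_cap k b u v \<longleftrightarrow> joined_via_cap k b v u"
  unfolding joined_via_cap_def using joined_sym by blast

lemma mem_cap_iff: "(u, v) \<in> cap k b \<longleftrightarrow> u < v \<and> joined_via_cap k b u v"
  by (simp add: cap_def)

lemma joined_cap_iff: "joined (cap k b) u v \<longleftrightarrow> u \<noteq> v \<and> joined_via_cap k b u v"
  unfolding joined_def cap_def using joined_via_cap_sym by auto

lemma joined_via_cap_through_cap:
  assumes mb: "matching_on S b" and w: "joined b (shift_up k u) w"
    and ww': "w \<in> {k, Suc k}" "w' \<in> {k, Suc k}" "w' \<noteq> w" and y: "joined b w' y"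
  shows "y \<notin> {k, Suc k} \<and> shift_down k y \<noteq> u \<and> joined_via_cap k b u (shift_down k y)"
proof -
  note unique = matching_on_partner_unique[OF mb]
  have "y \<noteq> w"
  proof
    assume "y = w"
    then have "shift_up k u = w'" using unique[of w] w y joined_sym by metis
    then show False using ww'(2) by auto
  qed
  moreover have "y \<noteq> w'" using matching_on_joined_neq[OF mb y] by blast
  ultimately have y_off: "y \<notin> {k, Suc k}" using ww' by blast
  then have y_up: "shift_up k (shift_down k y) = y" by simp
  have "shift_down k y \<noteq> u"
  proof
    assume "shift_down k y = u"
    then have "joined b (shift_up k u) w'" using y y_up joined_sym by metis
    then show False using unique[OF w] ww'(3) by blast
  qed
  moreover have "joined_via_cap k b u (shift_down k y)"
    using ww' w y y_up joined_sym unfolding joined_via_cap_def by (metis insert_iff singletonD)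
  ultimately show ?thesis using y_off by blast
qed

lemma joined_via_cap_partner:
  assumes mb: "matching_on {1..2*Suc m} b" and k: "1 \<le> k" "k \<le> 2*m+1" and u: "u \<in> {1..2*m}"
  shows "\<exists>v. v \<noteq> u \<and> joined_via_cap k b u v"
proof -
  have "shift_up k u \<in> {1..2*Suc m}" using shift_up_in_points u k by blast
  then obtain w where w: "joined b (shift_up k u) w" using matching_on_partner[OF mb] by blast
  show ?thesis
  proof (cases "w \<in> {k, Suc k}")
    case False
    then have "joined_via_cap k b u (shift_down k w)" using w by (simp add: joined_via_cap_def)
    moreover have "shift_down k w \<noteq> u"
    proof
      assume "shift_down k w = u"
      then have "w = shift_up k u" using False by auto
      then show False using w matching_on_joined_neq[OF mb] by blast
    qed
    ultimately show ?thesis by blast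
  next
    case True
    define w' where "w' = (if w = k then Suc k else k)"
    have w': "w' \<in> {1..2*Suc m}" "w' \<in> {k, Suc k}" "w' \<noteq> w" using k True by (auto simp: w'_def)
    obtain y where "joined b w' y" using matching_on_partner[OF mb w'(1)] by blast
    then show ?thesis using joined_via_cap_through_cap[OF mb w True w'(2,3)] by blast
  qed
qed

lemma cap_in_matchings:
  assumes b: "b \<in> matchings (Suc m)" and k: "1 \<le> k" "k \<le> 2*m+1"
  shows "cap k b \<in> matchings m"
proof -
  have mb: "matching_on {1..2*Suc m} b" using b by (simp add: matchings_def)
  note unique = matching_on_partner_unique[OF mb]
  have "matching_on {1..2*m} (cap k b)"
  proof (rule matching_onI)
    show "u < v" if "(u, v) \<in> cap k b" for u v using that by (simp add: cap_def)
    show "u \<in> {1..2*m}" if "joined (cap k b) u v" for u v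
    proof -
      have "shift_up k u \<in> {1..2*Suc m}"
        using that matching_on_joined_mem[OF mb]
        unfolding joined_cap_iff joined_via_cap_def by blast
      then show ?thesis using shift_up_in_pointsD k by blast
    qed
    show "\<exists>v. joined (cap k b) u v" if "u \<in> {1..2*m}" for u
      using joined_via_cap_partner[OF mb k that] joined_cap_iff by metis
    show "v = w" if "joined (cap k b) u v" "joined (cap k b) u w" for u v w
    proof -
      have "joined_via_cap k b u v" "joined_via_cap k b u w" using that joined_cap_iff by auto
      moreover have unique': "joined b y x \<Longrightarrow> joined b z x \<Longrightarrow> y = z" for x y z
        using unique joined_sym by metis
      ultimately have "shift_up k v = shift_up k w"
        unfolding joined_via_cap_def
        by (metis unique unique' shift_up_neq n_not_Suc_n)
      then show ?thesis by simp
    qed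
  qed
  then show ?thesis by (simp add: matchings_def)
qed

section \<open>Loops after inserting an arc\<close>

definition loop_rel :: "diagram \<Rightarrow> diagram \<Rightarrow> (nat \<times> nat) set" where
  "loop_rel a b = ((a \<union> b) \<union> (a \<union> b)\<inverse>)\<^sup>*"

lemma loops_eq: "loops n a b = card ({1..2*n} // loop_rel a b)"
  by (simp add: loops_def loop_rel_def)

lemma loops_commute: "loops n a b = loops n b a"
  by (simp add: loops_def Un_commute)

lemma equiv_loop_rel: "equiv UNIV (loop_rel a b)"
  unfolding equiv_def loop_rel_def
  by (auto simp: refl_on_def sym_Un_converse sym_rtrancl trans_rtrancl)

lemma loop_rel_sym: "(p, q) \<in> loop_rel a b \<Longrightarrow> (q, p) \<in> loop_rel a b"
  using equiv_loop_rel by (metis equivE symD)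

lemma loop_rel_refl: "(p, p) \<in> loop_rel a b"
  by (simp add: loop_rel_def)

lemma loop_rel_trans: "(p, q) \<in> loop_rel a b \<Longrightarrow> (q, r) \<in> loop_rel a b \<Longrightarrow> (p, r) \<in> loop_rel a b"
  unfolding loop_rel_def by (rule rtrancl_trans)

lemma loop_rel_eq_class_iff: "loop_rel a b `` {p} = loop_rel a b `` {q} \<longleftrightarrow> (p, q) \<in> loop_rel a b"
  using eq_equiv_class_iff[OF equiv_loop_rel UNIV_I UNIV_I] .

lemma joined_in_loop_rel: "joined a p q \<or> joined b p q \<Longrightarrow> (p, q) \<in> loop_rel a b"
  unfolding loop_rel_def joined_def by blast

lemma loop_rel_map:
  assumes edge: "\<And>p q. joined a p q \<or> joined b p q \<Longrightarrow> (f p, f q) \<in> loop_rel a' b'"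
    and xy: "(x, y) \<in> loop_rel a b"
  shows "(f x, f y) \<in> loop_rel a' b'"
  using xy unfolding loop_rel_def
proof (induction rule: rtrancl_induct)
  case (step y z)
  then have "joined a y z \<or> joined b y z" by (auto simp: joined_def)
  then show ?case using step.IH edge loop_rel_trans unfolding loop_rel_def by blast
qed simp

lemma loop_rel_closed:
  assumes edge: "\<And>p q. joined a p q \<or> joined b p q \<Longrightarrow> p \<in> C \<Longrightarrow> q \<in> C"
    and xy: "(x, y) \<in> loop_rel a b" and x: "x \<in> C"
  shows "y \<in> C"
  using xy x unfolding loop_rel_def
proof (induction rule: rtrancl_induct)
  case (step y z)
  then show ?case using edge by (auto simp: joined_def)
qed

lemma card_image_eq_kernel:
  assumes "finite S" "\<And>x y. x \<in> S \<Longrightarrow> y \<in> S \<Longrightarrow> f x = f y \<longleftrightarrow> h x = h y"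
  shows "card (f ` S) = card (h ` S)"
  using assms
proof (induction S rule: finite_induct)
  case (insert x S)
  then have "f x \<in> f ` S \<longleftrightarrow> h x \<in> h ` S" by auto
  then show ?case using insert by (auto simp: card_insert_if)
qed simp

lemma quotient_eq_image: "S // R = (\<lambda>x. R `` {x}) ` S"
  by (auto simp: quotient_def)

lemma card_quotient_eq:
  assumes "finite S" "f ` S = S'" "equiv UNIV R" "equiv UNIV R'"
    and iff: "\<And>x y. x \<in> S \<Longrightarrow> y \<in> S \<Longrightarrow> (x, y) \<in> R \<longleftrightarrow> (f x, f y) \<in> R'"
  shows "card (S // R) = card (S' // R')"
proof -
  have "S // R = (\<lambda>x. R `` {x}) ` S" "S' // R' = (\<lambda>x. R' `` {f x}) ` S"
    using assms(2) by (auto simp: quotient_eq_image)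
  moreover have "card ((\<lambda>x. R `` {x}) ` S) = card ((\<lambda>x. R' `` {f x}) ` S)"
    using iff eq_equiv_class_iff[OF assms(3)] eq_equiv_class_iff[OF assms(4)]
    by (intro card_image_eq_kernel[OF assms(1)]) simp
  ultimately show ?thesis by simp
qed

context
  fixes g b :: diagram and m k :: nat
  assumes b: "b \<in> matchings (Suc m)" and k: "1 \<le> k" "k \<le> 2*m+1"
begin

private lemma matching_on_b: "matching_on {1..2*Suc m} b"
  using b by (simp add: matchings_def)

lemma loop_rel_cap_lift:
  assumes "(c, d) \<in> loop_rel g (cap k b)"
  shows "(shift_up k c, shift_up k d) \<in> loop_rel (l k g) b"
proof (rule loop_rel_map[OF _ assms])
  have kk: "(k, Suc k) \<in> loop_rel (l k g) b"
    by (rule joined_in_loop_rel) (simp add: joined_l_iff)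
  fix p q assume "joined g p q \<or> joined (cap k b) p q"
  then consider "joined g p q" | "joined b (shift_up k p) (shift_up k q)"
    | "joined b (shift_up k p) k" "joined b (shift_up k q) (Suc k)"
    | "joined b (shift_up k p) (Suc k)" "joined b (shift_up k q) k"
    unfolding joined_cap_iff joined_via_cap_def by blast
  then show "(shift_up k p, shift_up k q) \<in> loop_rel (l k g) b"
  proof cases
    case 3
    then show ?thesis using kk joined_in_loop_rel joined_sym loop_rel_trans by metis
  next
    case 4
    then show ?thesis using kk joined_in_loop_rel joined_sym loop_rel_trans loop_rel_sym by metis
  qed (auto intro: joined_in_loop_rel)
qed

lemma collapse_edge_through_cap:
  assumes x: "joined b k x" and pq: "joined b (Suc k) q" and q: "q \<notin> {k, Suc k}"
  shows "(shift_down k x, shift_down k q) \<in> loop_rel g (cap k b)"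
proof -
  note unique = matching_on_partner_unique[OF matching_on_b]
  have "x \<noteq> k" using matching_on_joined_neq[OF matching_on_b x] by simp
  moreover have "x \<noteq> Suc k" using unique[of "Suc k" q k] pq x q joined_sym by auto
  moreover have "x \<noteq> q" using unique[of x k "Suc k"] pq x joined_sym by auto
  moreover have "joined b x k" "joined b q (Suc k)" using x pq joined_sym by auto
  ultimately have "joined (cap k b) (shift_down k x) (shift_down k q)"
    using q shift_down_eq_iff unfolding joined_cap_iff joined_via_cap_def by auto
  then show ?thesis by (rule joined_in_loop_rel[OF disjI2])
qed

text \<open>Paths for \<open>l k g\<close> and \<open>b\<close> project to paths for \<open>g\<close> and \<open>cap k b\<close> once the points
  \<open>k, k + 1\<close> are sent to (the image of) the partner \<open>x\<close> of \<open>k\<close> in \<open>b\<close>.\<close>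
lemma collapse_edge:
  assumes x: "joined b k x" and e: "joined (l k g) p q \<or> joined b p q"
  defines "f \<equiv> \<lambda>p. shift_down k (if p \<in> {k, Suc k} then x else p)"
  shows "(f p, f q) \<in> loop_rel g (cap k b)"
proof -
  have end_at_cap: "(f p, f q) \<in> loop_rel g (cap k b)"
    if pq: "joined b p q" and p: "p \<in> {k, Suc k}" and q: "q \<notin> {k, Suc k}" for p q
  proof (cases "p = k")
    case True
    then have "q = x" using matching_on_partner_unique[OF matching_on_b] x pq by blast
    then show ?thesis using True q by (simp add: f_def loop_rel_refl)
  next
    case False
    then show ?thesis using collapse_edge_through_cap[OF x] pq p q by (simp add: f_def)
  qed
  consider "p \<in> {k, Suc k}" "q \<in> {k, Suc k}"
    | "p \<notin> {k, Suc k}" "q \<notin> {k, Suc k}" "joined g (shift_down k p) (shift_down k q)"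
    | "p \<notin> {k, Suc k}" "q \<notin> {k, Suc k}" "joined b p q"
    | "joined b p q" "p \<in> {k, Suc k}" "q \<notin> {k, Suc k}"
    | "joined b q p" "q \<in> {k, Suc k}" "p \<notin> {k, Suc k}"
    using e joined_sym[of b p q] unfolding joined_l_iff by blast
  then show ?thesis
  proof cases
    case 1
    then have "f p = f q" by (auto simp: f_def)
    then show ?thesis by (simp add: loop_rel_refl)
  next
    case 2
    then show ?thesis by (simp add: f_def joined_in_loop_rel)
  next
    case 3
    moreover have "p \<noteq> q" using matching_on_joined_neq[OF matching_on_b] 3 by blast
    ultimately have "joined (cap k b) (shift_down k p) (shift_down k q)"
      using shift_down_eq_iff unfolding joined_cap_iff joined_via_cap_def by simp
    then show ?thesis using 3 by (simp add: f_def joined_in_loop_rel)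
  next
    case 4
    then show ?thesis using end_at_cap by blast
  next
    case 5
    then show ?thesis using end_at_cap[of q p] loop_rel_sym by blast
  qed
qed

lemma loop_rel_l_project:
  assumes x: "joined b k x" and pq: "(p, q) \<in> loop_rel (l k g) b"
  shows "(shift_down k (if p \<in> {k, Suc k} then x else p),
          shift_down k (if q \<in> {k, Suc k} then x else q)) \<in> loop_rel g (cap k b)"
  by (rule loop_rel_map[OF collapse_edge[OF x] pq])

lemma card_quotient_off_cap:
  "card (({1..2*Suc m} - {k, Suc k}) // loop_rel (l k g) b) = loops m g (cap k b)"
proof -
  obtain x where x: "joined b k x"
    using matching_on_partner[OF matching_on_b] k by fastforce
  have "card (({1..2*Suc m} - {k, Suc k}) // loop_rel (l k g) b)
      = card ({1..2*m} // loop_rel g (cap k b))"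
  proof (rule card_quotient_eq[OF _ shift_down_image[OF k] equiv_loop_rel equiv_loop_rel])
    fix p q assume "p \<in> {1..2*Suc m} - {k, Suc k}" "q \<in> {1..2*Suc m} - {k, Suc k}"
    then show "(p, q) \<in> loop_rel (l k g) b \<longleftrightarrow>
        (shift_down k p, shift_down k q) \<in> loop_rel g (cap k b)"
      using loop_rel_l_project[OF x, of p q] loop_rel_cap_lift[of "shift_down k p" "shift_down k q"]
      by auto
  qed simp
  then show ?thesis by (simp add: loops_eq)
qed

lemma loops_l_cap:
  "loops (Suc m) (l k g) b = (if (k, Suc k) \<in> b then 1 else 0) + loops m g (cap k b)"
proof -
  let ?E = "loop_rel (l k g) b" and ?S = "{1..2*Suc m} - {k, Suc k}"
  note unique = matching_on_partner_unique[OF matching_on_b]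
  have "(k, Suc k) \<in> ?E" by (rule joined_in_loop_rel) (simp add: joined_l_iff)
  then have "?E `` {Suc k} = ?E `` {k}" using loop_rel_eq_class_iff loop_rel_sym by blast
  moreover have "{1..2*Suc m} = insert k (insert (Suc k) ?S)" using k by auto
  then have "{1..2*Suc m} // ?E = (\<lambda>x. ?E `` {x}) ` insert k (insert (Suc k) ?S)"
    unfolding quotient_eq_image by (rule arg_cong)
  ultimately have classes: "{1..2*Suc m} // ?E = insert (?E `` {k}) (?S // ?E)"
    by (simp add: quotient_eq_image)
  show ?thesis
  proof (cases "(k, Suc k) \<in> b")
    case True
    text \<open>The arc \<open>(k, k + 1)\<close> of \<open>b\<close> closes up with that of \<open>l k g\<close> to an isolated loop.\<close>
    have "joined b k (Suc k)" using True by (simp add: joined_def)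
    then have "q \<in> {k, Suc k}" if "joined b p q" "p \<in> {k, Suc k}" for p q
      using that unique[of k q "Suc k"] unique[of "Suc k" q k] joined_sym by auto
    moreover have "q \<in> {k, Suc k}" if "joined (l k g) p q" "p \<in> {k, Suc k}" for p q
      using that by (auto simp: joined_l_iff)
    ultimately have closed: "q \<in> {k, Suc k}" if "(p, q) \<in> ?E" "p \<in> {k, Suc k}" for p q
      using loop_rel_closed[where C = "{k, Suc k}", OF _ that] by blast
    have "?E `` {k} \<notin> ?S // ?E"
    proof
      assume "?E `` {k} \<in> ?S // ?E"
      then obtain p where "p \<in> ?S" "?E `` {k} = ?E `` {p}" unfolding quotient_eq_image by blast
      then show False using closed[of k p] loop_rel_eq_class_iff by blast
    qed
    then have "card ({1..2*Suc m} // ?E) = Suc (card (?S // ?E))"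
      unfolding classes by (simp add: quotient_eq_image)
    then show ?thesis using True card_quotient_off_cap by (simp add: loops_eq)
  next
    case False
    obtain x where x: "joined b k x"
      using matching_on_partner[OF matching_on_b] k by fastforce
    have "x \<noteq> Suc k" using x False matching_on_less[OF matching_on_b, of "Suc k" k]
      by (auto simp: joined_def)
    moreover have "x \<in> {1..2*Suc m}" "x \<noteq> k"
      using matching_on_joined_mem[OF matching_on_b x] matching_on_joined_neq[OF matching_on_b x]
      by auto
    moreover have "?E `` {k} = ?E `` {x}"
      using x joined_in_loop_rel loop_rel_eq_class_iff by blast
    ultimately have "?E `` {k} \<in> ?S // ?E" by (auto simp: quotient_eq_image)
    then show ?thesis
      using False card_quotient_off_cap classes by (simp add: loops_eq insert_absorb)
  qed
qed

end

lemma matching_on_mem_iff: "matching_on S g \<Longrightarrow> (u, v) \<in> g \<longleftrightarrow> u < v \<and> joined g u v"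
  using matching_on_less[of S g u v] matching_on_less[of S g v u] by (auto simp: joined_def)

lemma cap_l_same: "matching_on S g \<Longrightarrow> cap k (l k g) = g"
  by (auto simp: set_eq_iff mem_cap_iff matching_on_mem_iff joined_via_cap_def joined_l_iff)

lemma cap_Suc_l:
  assumes "matching_on S g"
  shows "cap (Suc k) (l k g) = g"
proof -
  have up_k: "shift_up (Suc k) k = k" by (simp add: shift_up_def)
  have up_other: "shift_up (Suc k) w \<notin> {k, Suc k} \<and> shift_down k (shift_up (Suc k) w) = w"
    if "w \<noteq> k" for w
    using that by (auto simp: shift_up_def shift_down_def)
  have Suc_Suc: "Suc (Suc k) \<notin> {k, Suc k}" "shift_down k (Suc (Suc k)) = k"
    by (auto simp: shift_down_def)
  have "joined_via_cap (Suc k) (l k g) u v \<longleftrightarrow> joined g u v" if "u < v" for u v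
  proof (cases "u = k")
    case True
    then show ?thesis using that up_k up_other[of v] Suc_Suc
      by (auto simp: joined_via_cap_def joined_l_new_arc joined_l_old_point joined_sym)
  next
    case False
    then show ?thesis using that up_k up_other[of u] up_other[of v] Suc_Suc
      by (cases "v = k")
        (auto simp: joined_via_cap_def joined_l_new_arc joined_l_old_point joined_sym)
  qed
  then show ?thesis using matching_on_mem_iff[OF assms] by (auto simp: mem_cap_iff)
qed

lemma cap_l_Suc:
  assumes "matching_on S g"
  shows "cap k (l (Suc k) g) = g"
proof -
  have up_k: "shift_up k k = Suc (Suc k)" by (simp add: shift_up_def)
  have up_other: "shift_up k w \<notin> {Suc k, Suc (Suc k)} \<and> shift_down (Suc k) (shift_up k w) = w"
    if "w \<noteq> k" for w
    using that by (auto simp: shift_up_def shift_down_def)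
  have k: "k \<notin> {Suc k, Suc (Suc k)}" "shift_down (Suc k) k = k"
    by (auto simp: shift_down_def)
  have "joined_via_cap k (l (Suc k) g) u v \<longleftrightarrow> joined g u v" if "u < v" for u v
  proof (cases "u = k")
    case True
    then show ?thesis using that up_k up_other[of v] k
      by (auto simp: joined_via_cap_def joined_l_new_arc joined_l_old_point joined_sym)
  next
    case False
    then show ?thesis using that up_k up_other[of u] up_other[of v] k
      by (cases "v = k")
        (auto simp: joined_via_cap_def joined_l_new_arc joined_l_old_point joined_sym)
  qed
  then show ?thesis using matching_on_mem_iff[OF assms] by (auto simp: mem_cap_iff)
qed

lemma joined_via_cap_l_below:
  assumes jk: "j \<le> k"
  shows "joined_via_cap (k + 2) (l j g) u v \<longleftrightarrow> (u = j \<and> v = Suc j) \<or> (u = Suc j \<and> v = j) \<or>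
     (u \<notin> {j, Suc j} \<and> v \<notin> {j, Suc j} \<and> joined_via_cap k g (shift_down j u) (shift_down j v))"
proof -
  \<comment> \<open>stated with \<open>Suc (Suc k)\<close>, the simplifier's normal form of \<open>k + 2\<close>\<close>
  have pair: "Suc (Suc k) \<noteq> j" "Suc k \<noteq> j" "Suc (Suc (Suc k)) \<noteq> j"
    "shift_down j (Suc (Suc k)) = k" "shift_down j (Suc (Suc (Suc k))) = Suc k"
    using jk by (auto simp: shift_down_def)
  have fixed: "shift_up (Suc (Suc k)) w = w" if "w \<in> {j, Suc j}" for w
    using jk that by (auto simp: shift_up_def)
  have other: "shift_up (Suc (Suc k)) w \<noteq> j" "shift_up (Suc (Suc k)) w \<noteq> Suc j"
    "shift_down j (shift_up (Suc (Suc k)) w) = shift_up k (shift_down j w)"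
    if "w \<notin> {j, Suc j}" for w
    using jk that by (auto simp: shift_up_def shift_down_def)
  show ?thesis
    by (cases "u = j"; cases "u = Suc j"; cases "v = j"; cases "v = Suc j")
      (simp_all add: joined_via_cap_def joined_l_new_arc joined_l_old_point pair fixed other)
qed

lemma cap_l_below:
  assumes "j \<le> k"
  shows "cap (k + 2) (l j g) = l j (cap k g)"
proof (intro set_eqI, clarify)
  fix u v
  show "(u, v) \<in> cap (k + 2) (l j g) \<longleftrightarrow> (u, v) \<in> l j (cap k g)"
    unfolding mem_cap_iff mem_l_iff joined_via_cap_l_below[OF assms]
    using shift_down_less_iff[of u j v] by auto
qed

lemma joined_via_cap_l_above:
  assumes ij: "i \<le> j"
  shows "joined_via_cap i (l (j + 2) g) u v \<longleftrightarrow> (u = j \<and> v = Suc j) \<or> (u = Suc j \<and> v = j) \<or>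
     (u \<notin> {j, Suc j} \<and> v \<notin> {j, Suc j} \<and> joined_via_cap i g (shift_down j u) (shift_down j v))"
proof -
  have pair: "shift_up i j = Suc (Suc j)" "shift_up i (Suc j) = Suc (Suc (Suc j))"
    "i \<noteq> Suc j" "i \<noteq> Suc (Suc j)" "i \<noteq> Suc (Suc (Suc j))"
    "shift_down (Suc (Suc j)) i = i" "shift_down (Suc (Suc j)) (Suc i) = Suc i"
    using ij by (auto simp: shift_up_def shift_down_def)
  have other: "shift_up i w \<noteq> Suc (Suc j)" "shift_up i w \<noteq> Suc (Suc (Suc j))"
    "shift_down (Suc (Suc j)) (shift_up i w) = shift_up i (shift_down j w)"
    if "w \<notin> {j, Suc j}" for w
    using ij that by (auto simp: shift_up_def shift_down_def)
  show ?thesis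
    by (cases "u = j"; cases "u = Suc j"; cases "v = j"; cases "v = Suc j")
      (simp_all add: joined_via_cap_def joined_l_new_arc joined_l_old_point pair other)
qed

lemma cap_l_above:
  assumes "i \<le> j"
  shows "cap i (l (j + 2) g) = l j (cap i g)"
proof (intro set_eqI, clarify)
  fix u v
  show "(u, v) \<in> cap i (l (j + 2) g) \<longleftrightarrow> (u, v) \<in> l j (cap i g)"
    unfolding mem_cap_iff mem_l_iff joined_via_cap_l_above[OF assms]
    using shift_down_less_iff[of u j v] by auto
qed

section \<open>Chebyshev polynomials\<close>

fun Delta_poly :: "nat \<Rightarrow> rat poly" where
  "Delta_poly 0 = 1"
| "Delta_poly (Suc 0) = [:0, 1:]"
| "Delta_poly (Suc (Suc k)) = [:0, 1:] * Delta_poly (Suc k) - Delta_poly k"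

lemma Delta_eq_Fract: "Delta k = Fract (Delta_poly k) 1"
  by (induction k rule: Delta_poly.induct) (simp_all add: qq_def One_fract_def)

lemma coeff_Delta_poly: "coeff (Delta_poly k) k = 1 \<and> (\<forall>i>k. coeff (Delta_poly k) i = 0)"
proof (induction k rule: Delta_poly.induct)
  case (3 k)
  have times_X: "[:0, 1:] * p = pCons 0 p" for p :: "rat poly" by (simp add: pCons_eq_iff)
  show ?case
  proof (intro conjI allI impI)
    show "coeff (Delta_poly (Suc (Suc k))) (Suc (Suc k)) = 1" using 3 by (simp add: times_X)
    fix i assume "i > Suc (Suc k)"
    then obtain i' where "i = Suc i'" "i' > Suc k" by (cases i) auto
    then show "coeff (Delta_poly (Suc (Suc k))) i = 0" using 3 by (simp add: times_X)
  qed
qed (simp_all add: coeff_pCons split: nat.splits)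

lemma Delta_nonzero: "Delta k \<noteq> 0"
proof -
  have "Delta_poly k \<noteq> 0" using coeff_Delta_poly[of k] by auto
  then show ?thesis by (simp add: Delta_eq_Fract Zero_fract_def eq_fract)
qed

lemma qq_minus_Delta_ratio: "qq - Delta k / Delta (Suc k) = Delta (Suc (Suc k)) / Delta (Suc k)"
  using Delta_nonzero[of "Suc k"] by (simp add: field_simps)

section \<open>The Markov form against a single diagram\<close>

text \<open>\<open>markov_at\<close> is evaluated at arbitrary perfect matchings \<open>b\<close>, crossing ones included; this
  spares proving that capping preserves planarity.\<close>
definition markov_at :: "nat \<Rightarrow> vec \<Rightarrow> diagram \<Rightarrow> K" where
  "markov_at n v b = (\<Sum>a\<in>D n. v a * qq ^ loops n a b)"

lemma markov_eq_sum_markov_at: "markov n v w = (\<Sum>b\<in>D n. w b * markov_at n v b)"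
proof -
  have "markov n v w = (\<Sum>b\<in>D n. \<Sum>a\<in>D n. v a * w b * qq ^ loops n a b)"
    unfolding markov_def by (rule sum.swap)
  then show ?thesis by (simp add: markov_at_def sum_distrib_left mult_ac)
qed

lemma markov_commute: "markov n v w = markov n w v"
proof -
  have "markov n v w = (\<Sum>b\<in>D n. \<Sum>a\<in>D n. v a * w b * qq ^ loops n a b)"
    unfolding markov_def by (rule sum.swap)
  then show ?thesis unfolding markov_def by (simp add: loops_commute mult_ac)
qed

lemma markov_at_diff: "markov_at n (\<lambda>b. v b - c * w b) g = markov_at n v g - c * markov_at n w g"
  by (simp add: markov_at_def algebra_simps sum_subtractf sum_distrib_left)

lemma lin_l_eq_0: "1 \<le> k \<Longrightarrow> k \<le> 2*m+1 \<Longrightarrow> b \<notin> D (Suc m) \<Longrightarrow> lin_l m k v b = 0"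
  unfolding lin_l_def using l_in_D by (auto intro!: sum.neutral)

lemma sum_lin_l:
  assumes "1 \<le> k" "k \<le> 2*m+1"
  shows "(\<Sum>b\<in>D (Suc m). lin_l m k v b * h b) = (\<Sum>a\<in>D m. v a * h (l k a))"
proof -
  have "(\<Sum>b\<in>D (Suc m). lin_l m k v b * h b)
      = (\<Sum>b\<in>D (Suc m). \<Sum>a\<in>D m. if l k a = b then v a * h b else 0)"
    unfolding lin_l_def sum_distrib_right by (intro sum.cong refl) auto
  also have "\<dots> = (\<Sum>a\<in>D m. \<Sum>b\<in>D (Suc m). if l k a = b then v a * h b else 0)"
    by (rule sum.swap)
  also have "\<dots> = (\<Sum>a\<in>D m. v a * h (l k a))"
    using l_in_D[OF _ assms] by (simp add: finite_D)
  finally show ?thesis .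
qed

lemma markov_at_lin_l:
  assumes k: "1 \<le> k" "k \<le> 2*m+1" and b: "b \<in> matchings (Suc m)"
  shows "markov_at (Suc m) (lin_l m k v) b
    = (if (k, Suc k) \<in> b then qq else 1) * markov_at m v (cap k b)"
proof -
  have "markov_at (Suc m) (lin_l m k v) b = (\<Sum>a\<in>D m. v a * qq ^ loops (Suc m) (l k a) b)"
    unfolding markov_at_def by (rule sum_lin_l[OF k])
  also have "\<dots> = (\<Sum>a\<in>D m. (if (k, Suc k) \<in> b then qq else 1) * (v a * qq ^ loops m a (cap k b)))"
    using loops_l_cap[OF b k] by (simp add: power_add mult_ac)
  finally show ?thesis by (simp add: markov_at_def sum_distrib_left)
qed

context
  fixes g :: diagram and m :: nat
  assumes g: "g \<in> matchings m"
begin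

private lemma matching_on_g: "matching_on {1..2*m} g"
  using g by (simp add: matchings_def)

lemma markov_at_lin_l_l:
  "1 \<le> k \<Longrightarrow> k \<le> 2*m+1 \<Longrightarrow> markov_at (Suc m) (lin_l m k v) (l k g) = qq * markov_at m v g"
  using markov_at_lin_l l_in_matchings[OF g] cap_l_same[OF matching_on_g] by (simp add: mem_l_iff)

lemma markov_at_lin_l_Suc_l:
  "1 \<le> k \<Longrightarrow> Suc k \<le> 2*m+1 \<Longrightarrow> markov_at (Suc m) (lin_l m (Suc k) v) (l k g) = markov_at m v g"
  using markov_at_lin_l[of "Suc k" m] l_in_matchings[OF g, of k] cap_Suc_l[OF matching_on_g]
  by (simp add: mem_l_iff)

lemma markov_at_lin_l_l_Suc:
  "1 \<le> k \<Longrightarrow> Suc k \<le> 2*m+1 \<Longrightarrow> markov_at (Suc m) (lin_l m k v) (l (Suc k) g) = markov_at m v g"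
  using markov_at_lin_l[of k m] l_in_matchings[OF g, of "Suc k"] cap_l_Suc[OF matching_on_g]
  by (simp add: mem_l_iff)

lemma markov_at_lin_l_l_below:
  assumes "1 \<le> k" "k \<le> j" "j + 2 \<le> 2*m+1"
  shows "markov_at (Suc m) (lin_l m (j + 2) v) (l k g)
    = (if (j + 2, Suc (j + 2)) \<in> l k g then qq else 1) * markov_at m v (l k (cap j g))"
  using markov_at_lin_l[of "j + 2" m] l_in_matchings[OF g, of k] cap_l_below[of k j g] assms
  by simp

lemma markov_at_lin_l_l_above:
  assumes "1 \<le> i" "i \<le> j" "j + 2 \<le> 2*m+1"
  shows "markov_at (Suc m) (lin_l m i v) (l (j + 2) g)
    = (if (i, Suc i) \<in> l (j + 2) g then qq else 1) * markov_at m v (l j (cap i g))"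
  using markov_at_lin_l[of i m] l_in_matchings[OF g, of "j + 2"] cap_l_above[of i j g] assms
  by simp

end

section \<open>Vanishing on diagrams with an innermost arc further left\<close>

lemma ep_Cons_ge_2:
  "as \<noteq> [] \<Longrightarrow> 2 \<le> a \<Longrightarrow> ep (a # as) =
     (\<lambda>b. lin_l (length as) a (ep as) b - Delta (a - 2) / Delta (a - 1) * ep ((a - 1) # as) b)"
  by simp

lemma ep_Cons_le_1: "as \<noteq> [] \<Longrightarrow> a \<le> 1 \<Longrightarrow> ep (a # as) = lin_l (length as) 1 (ep as)"
  by simp

declare ep.simps [simp del]

text \<open>As for \<open>ep\<close>, lists are read as \<open>[a\<^sub>n, \<dots>, a\<^sub>1]\<close>.\<close>
fun restricted :: "nat list \<Rightarrow> bool" where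
  "restricted [] = False"
| "restricted [a] = (a = 1)"
| "restricted (a # b # as) = (1 \<le> a \<and> a \<le> Suc b \<and> restricted (b # as))"

lemma restricted_hd: "restricted as \<Longrightarrow> 1 \<le> hd as \<and> hd as \<le> length as"
  by (induction as rule: restricted.induct) auto

lemma single_arc_in_D: "{(1, 2)} \<in> D 1"
proof -
  have "{} \<in> D 0" by (simp add: D_def)
  from l_in_D[OF this, of 1] show ?thesis by (simp add: l_def numeral_2_eq_2)
qed

lemma ep_eq_0:
  assumes "restricted as" "b \<notin> D (length as)"
  shows "ep as b = 0"
  using assms
proof (induction as rule: restricted.induct)
  case (2 a)
  then show ?case using single_arc_in_D by (auto simp: ep.simps delta_def)
next
  case (3 a c as)
  have "ep (a' # c # as) b = 0" if "1 \<le> a'" "a' \<le> 2 * length (c # as) + 1" for a'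
    using that
  proof (induction a')
    case (Suc a')
    have "lin_l (length (c # as)) (Suc a') (ep (c # as)) b = 0"
      using lin_l_eq_0 Suc.prems 3 by simp
    moreover have "a' \<noteq> 0 \<Longrightarrow> ep (a' # c # as) b = 0" using Suc by simp
    ultimately show ?case
      by (cases "a' = 0") (simp_all add: ep_Cons_le_1 ep_Cons_ge_2 del: length_Cons)
  qed simp
  then show ?case using 3 restricted_hd[of "c # as"] by simp
qed simp

text \<open>In this context \<open>vanish\<close> is the induction hypothesis of \<open>markov_at_ep_l_below\<close>.\<close>
context
  fixes tau :: "nat list" and m :: nat
  assumes tau: "restricted tau" and m: "length tau = m"
    and vanish: "\<And>g j. g \<in> matchings (m - 1) \<Longrightarrow> 1 \<le> j \<Longrightarrow> j < hd tau \<Longrightarrow>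
      markov_at m (ep tau) (l j g) = 0"
begin

private lemma tau_ne: "tau \<noteq> []" and hd_tau: "1 \<le> hd tau" "hd tau \<le> m"
  using tau restricted_hd[OF tau] m by auto

lemma markov_at_ep_Cons_ge_2:
  assumes "2 \<le> a"
  shows "markov_at (Suc m) (ep (a # tau)) x = markov_at (Suc m) (lin_l m a (ep tau)) x
    - Delta (a - 2) / Delta (a - 1) * markov_at (Suc m) (ep ((a - 1) # tau)) x"
proof -
  have "ep (a # tau)
      = (\<lambda>b. lin_l m a (ep tau) b - Delta (a - 2) / Delta (a - 1) * ep ((a - 1) # tau) b)"
    using ep_Cons_ge_2[OF tau_ne assms] m by simp
  then show ?thesis by (simp only: markov_at_diff)
qed

lemma markov_at_ep_Cons_1:
  "markov_at (Suc m) (ep (Suc 0 # tau)) x = markov_at (Suc m) (lin_l m 1 (ep tau)) x"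
  using ep_Cons_le_1[OF tau_ne] m by simp

private lemma vanish_cap:
  assumes "g \<in> matchings m" "1 \<le> i" "i \<le> 2*m - 1" "1 \<le> j" "j < hd tau"
  shows "markov_at m (ep tau) (l j (cap i g)) = 0"
  using assms hd_tau cap_in_matchings[of g "m - 1" i] by (intro vanish) simp_all

lemma markov_at_ep_Cons_l_far:
  "1 \<le> a \<Longrightarrow> a + 2 \<le> j \<Longrightarrow> j \<le> hd tau + 1 \<Longrightarrow> g \<in> matchings m \<Longrightarrow>
     markov_at (Suc m) (ep (a # tau)) (l j g) = 0"
proof (induction a arbitrary: j)
  case (Suc a)
  define j' where "j' = j - 2"
  have j: "j = j' + 2" using Suc.prems(2) by (simp add: j'_def)
  have "markov_at (Suc m) (lin_l m (Suc a) (ep tau)) (l j g) = 0"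
    using markov_at_lin_l_l_above[OF Suc.prems(4), of "Suc a" j']
      vanish_cap[OF Suc.prems(4), of "Suc a" j'] Suc.prems hd_tau j
    by simp
  then show ?case
    using Suc markov_at_ep_Cons_ge_2[of "Suc a"] markov_at_ep_Cons_1
    by (cases "a = 0") simp_all
qed simp

lemma markov_at_ep_Cons_l_Suc:
  assumes "1 \<le> a" "a \<le> hd tau" "g \<in> matchings m"
  shows "markov_at (Suc m) (ep (a # tau)) (l (Suc a) g) = markov_at m (ep tau) g"
proof -
  have "markov_at (Suc m) (lin_l m a (ep tau)) (l (Suc a) g) = markov_at m (ep tau) g"
    using markov_at_lin_l_l_Suc[OF assms(3)] assms hd_tau by simp
  moreover have "a \<noteq> 1 \<Longrightarrow> markov_at (Suc m) (ep ((a - 1) # tau)) (l (Suc a) g) = 0"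
    using markov_at_ep_Cons_l_far[of "a - 1" "Suc a" g] assms by simp
  ultimately show ?thesis
    using assms markov_at_ep_Cons_ge_2[of a] markov_at_ep_Cons_1
    by (cases "a = 1") simp_all
qed

lemma markov_at_ep_Cons_l_same:
  assumes a: "1 \<le> a" "a \<le> hd tau + 1" and g: "g \<in> matchings m"
  shows "markov_at (Suc m) (ep (a # tau)) (l a g)
    = Delta a / Delta (a - 1) * markov_at m (ep tau) g"
proof (cases "a = 1")
  case True
  then show ?thesis
    using markov_at_ep_Cons_1 markov_at_lin_l_l[OF g, of 1] hd_tau by (simp add: qq_def)
next
  case False
  then obtain k where k: "a = Suc (Suc k)" using a by (cases a; cases "a - 1") auto
  have "markov_at (Suc m) (ep (a # tau)) (l a g)
      = qq * markov_at m (ep tau) g - Delta k / Delta (Suc k) * markov_at m (ep tau) g"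
    using markov_at_ep_Cons_ge_2[of a] markov_at_lin_l_l[OF g, of a]
      markov_at_ep_Cons_l_Suc[of "a - 1" g] a g hd_tau k
    by simp
  also have "\<dots> = (qq - Delta k / Delta (Suc k)) * markov_at m (ep tau) g"
    by (simp add: left_diff_distrib)
  also have "\<dots> = Delta a / Delta (a - 1) * markov_at m (ep tau) g"
    by (simp add: k qq_minus_Delta_ratio)
  finally show ?thesis .
qed

lemma markov_at_ep_Cons_l_below:
  "1 \<le> j \<Longrightarrow> j < a \<Longrightarrow> a \<le> hd tau + 1 \<Longrightarrow> g \<in> matchings m \<Longrightarrow>
     markov_at (Suc m) (ep (a # tau)) (l j g) = 0"
proof (induction a arbitrary: j)
  case (Suc a)
  then have a: "1 \<le> a" "2 \<le> Suc a" by auto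
  show ?case
  proof (cases "j = a")
    case True
    text \<open>The correction term in the definition of \<open>e'\<close> is chosen to cancel exactly here.\<close>
    have "markov_at (Suc m) (lin_l m (Suc a) (ep tau)) (l a g) = markov_at m (ep tau) g"
      using markov_at_lin_l_Suc_l[OF Suc.prems(4), of a] a Suc.prems hd_tau by simp
    moreover have "markov_at (Suc m) (ep (a # tau)) (l a g)
        = Delta a / Delta (a - 1) * markov_at m (ep tau) g"
      using markov_at_ep_Cons_l_same[OF a(1) _ Suc.prems(4)] Suc.prems by simp
    moreover have "Delta (a - 1) / Delta a * (Delta a / Delta (a - 1)) = 1"
      using Delta_nonzero[of a] Delta_nonzero[of "a - 1"] by simp
    ultimately show ?thesis
      using True markov_at_ep_Cons_ge_2[OF a(2), of "l a g"] a(1)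
      by (simp add: mult.assoc[symmetric])
  next
    case False
    then have "j < a" "j \<le> a - 1" using Suc.prems by auto
    have "markov_at (Suc m) (lin_l m (a - 1 + 2) (ep tau)) (l j g) = 0"
      using markov_at_lin_l_l_below[OF Suc.prems(4), of j "a - 1"]
        vanish_cap[OF Suc.prems(4), of "a - 1" j] \<open>j \<le> a - 1\<close> Suc.prems hd_tau
      by simp
    then show ?thesis
      using Suc.IH[OF Suc.prems(1) \<open>j < a\<close>] Suc.prems markov_at_ep_Cons_ge_2[OF a(2)] a(1)
      by simp
  qed
qed simp

lemma sum_ep_Cons_markov_at_ep_Cons:
  assumes sig: "sig \<noteq> []" "length sig = m" and a: "1 \<le> a" "a \<le> hd tau + 1"
  shows "1 \<le> c \<Longrightarrow> c \<le> a \<Longrightarrow>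
    (\<Sum>x\<in>D (Suc m). ep (c # sig) x * markov_at (Suc m) (ep (a # tau)) x) =
      (if c = a then Delta a / Delta (a - 1) * markov m (ep tau) (ep sig) else 0)"
proof (induction c)
  case (Suc c)
  have "(\<Sum>x\<in>D (Suc m). lin_l m (Suc c) (ep sig) x * markov_at (Suc m) (ep (a # tau)) x)
      = (\<Sum>y\<in>D m. ep sig y * markov_at (Suc m) (ep (a # tau)) (l (Suc c) y))"
    using Suc.prems a hd_tau by (intro sum_lin_l) auto
  also have "\<dots> = (if Suc c = a then Delta a / Delta (a - 1) * markov m (ep tau) (ep sig) else 0)"
  proof (cases "Suc c = a")
    case True
    then show ?thesis
      using markov_at_ep_Cons_l_same[OF a] D_eq
      by (simp add: markov_eq_sum_markov_at[of m "ep tau"] sum_distrib_left mult_ac)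
  next
    case False
    then show ?thesis
      using markov_at_ep_Cons_l_below[of "Suc c" a] Suc.prems a D_eq by simp
  qed
  finally have lin_l_term:
    "(\<Sum>x\<in>D (Suc m). lin_l m (Suc c) (ep sig) x * markov_at (Suc m) (ep (a # tau)) x)
      = (if Suc c = a then Delta a / Delta (a - 1) * markov m (ep tau) (ep sig) else 0)" .
  show ?case
  proof (cases "c = 0")
    case True
    then show ?thesis using lin_l_term ep_Cons_le_1[OF sig(1)] sig(2) by simp
  next
    case False
    define r where "r = Delta (Suc c - 2) / Delta (Suc c - 1)"
    have "ep (Suc c # sig) = (\<lambda>x. lin_l m (Suc c) (ep sig) x - r * ep (c # sig) x)"
      using ep_Cons_ge_2[OF sig(1), of "Suc c"] sig(2) False by (simp add: r_def)
    then have "(\<Sum>x\<in>D (Suc m). ep (Suc c # sig) x * markov_at (Suc m) (ep (a # tau)) x)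
      = (\<Sum>x\<in>D (Suc m). lin_l m (Suc c) (ep sig) x * markov_at (Suc m) (ep (a # tau)) x)
        - r * (\<Sum>x\<in>D (Suc m). ep (c # sig) x * markov_at (Suc m) (ep (a # tau)) x)"
      by (simp add: algebra_simps sum_subtractf sum_distrib_left)
    then show ?thesis using lin_l_term Suc False by simp
  qed
qed simp

end

lemma markov_at_ep_l_below:
  "restricted tau \<Longrightarrow> g \<in> matchings (length tau - 1) \<Longrightarrow> 1 \<le> j \<Longrightarrow> j < hd tau \<Longrightarrow>
     markov_at (length tau) (ep tau) (l j g) = 0"
proof (induction tau arbitrary: g j rule: restricted.induct)
  case (3 a c as)
  have "restricted (c # as)" using "3.prems"(1) by simp
  from markov_at_ep_Cons_l_below[OF this refl "3.IH"] show ?case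
    using "3.prems" by simp
qed auto

section \<open>Orthogonality\<close>

lemma markov_delta_delta:
  assumes x: "x \<in> D n"
  shows "markov n (delta x) (delta x) = qq ^ loops n x x"
proof -
  have "markov n (delta x) (delta x)
      = (\<Sum>a\<in>D n. if a = x then (\<Sum>b\<in>D n. if b = x then qq ^ loops n a b else 0) else 0)"
    unfolding markov_def delta_def by (intro sum.cong refl) (auto intro!: sum.cong)
  also have "\<dots> = (\<Sum>a\<in>D n. if a = x then qq ^ loops n a x else 0)"
    by (intro sum.cong refl) (simp add: sum.delta[OF finite_D] x)
  also have "\<dots> = qq ^ loops n x x" by (simp add: sum.delta[OF finite_D] x)
  finally show ?thesis .
qed

lemma loops_single_arc: "loops 1 {(1, 2)} {(1, 2)} = 1"
proof -
  have "{(1, 2)} \<in> matchings (Suc 0)" using single_arc_in_D by (simp add: D_eq)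
  moreover have "l 1 {} = {(1, 2)}" by (simp add: l_def)
  ultimately show ?thesis using loops_l_cap[of "{(1, 2)}" 0 1 "{}"] by (simp add: loops_eq)
qed

lemma markov_ep_Cons_ep_Cons:
  assumes tau: "restricted tau" and sig: "restricted sig" "length sig = length tau"
    and a: "1 \<le> a" "a \<le> hd tau + 1" and c: "1 \<le> c" "c \<le> hd sig + 1"
  shows "markov (Suc (length tau)) (ep (a # tau)) (ep (c # sig))
    = (if c = a then Delta a / Delta (a - 1) * markov (length tau) (ep tau) (ep sig) else 0)"
proof -
  note vanish_tau = markov_at_ep_l_below[OF tau]
  note vanish_sig = markov_at_ep_l_below[OF sig(1), unfolded sig(2)]
  have ne: "tau \<noteq> []" "sig \<noteq> []" using tau sig by auto
  show ?thesis
  proof (cases "c \<le> a")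
    case True
    have "markov (Suc (length tau)) (ep (a # tau)) (ep (c # sig))
        = (\<Sum>x\<in>D (Suc (length tau)). ep (c # sig) x * markov_at (Suc (length tau)) (ep (a # tau)) x)"
      by (rule markov_eq_sum_markov_at)
    then show ?thesis
      using sum_ep_Cons_markov_at_ep_Cons[OF tau refl vanish_tau ne(2) sig(2) a] c True by simp
  next
    case False
    have "markov (Suc (length tau)) (ep (a # tau)) (ep (c # sig))
        = (\<Sum>x\<in>D (Suc (length tau)). ep (a # tau) x * markov_at (Suc (length tau)) (ep (c # sig)) x)"
      by (subst markov_commute) (rule markov_eq_sum_markov_at)
    then show ?thesis
      using sum_ep_Cons_markov_at_ep_Cons[OF sig(1,2) vanish_sig ne(1) refl c, of a] a False by simp
  qed
qed

lemma markov_ep_ep: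
  "restricted al \<Longrightarrow> restricted be \<Longrightarrow> length be = length al \<Longrightarrow>
     markov (length al) (ep al) (ep be) = (if al = be then (\<Prod>a\<leftarrow>al. Delta a / Delta (a - 1)) else 0)"
proof (induction al arbitrary: be rule: restricted.induct)
  case (2 a)
  then have "be = [1]" "a = 1" by (cases be; auto)+
  moreover have "ep [1] = delta {(1, 2)}" by (simp add: ep.simps)
  ultimately show ?case
    using markov_delta_delta[OF single_arc_in_D] loops_single_arc by (simp add: qq_def)
next
  case (3 a b as)
  obtain c sig where be: "be = c # sig" and sig: "restricted sig" "length sig = length (b # as)"
    and c: "1 \<le> c" "c \<le> hd sig + 1"
    using "3.prems"(2,3) by (cases be; cases "tl be") auto
  have tau: "restricted (b # as)" and a: "1 \<le> a" "a \<le> hd (b # as) + 1" using "3.prems"(1) by auto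
  have IH: "markov (length (b # as)) (ep (b # as)) (ep sig)
      = (if b # as = sig then (\<Prod>a\<leftarrow>b # as. Delta a / Delta (a - 1)) else 0)"
    using "3.IH"[OF tau sig] .
  show ?case
    unfolding be using markov_ep_Cons_ep_Cons[OF tau sig a c] IH
    by (cases "c = a"; cases "sig = b # as") auto
qed simp

section \<open>Restricted sequences\<close>

lemma matching_on_D: "a \<in> D n \<Longrightarrow> matching_on {1..2*n} a"
  by (simp add: D_eq matchings_def)

lemma D_arc_inside:
  assumes a: "a \<in> D n" and ij: "(i, j) \<in> a" and short: "Suc i < j"
  shows "\<exists>i' j'. (i', j') \<in> a \<and> i < i' \<and> j' < j"
proof -
  note m = matching_on_D[OF a]
  have nc: "\<not> (p < p' \<and> p' < q \<and> q < q')" if "(p, q) \<in> a" "(p', q') \<in> a" for p q p' q'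
    using a that unfolding D_eq noncrossing_def by blast
  have "Suc i \<in> {1..2*n}"
    using matching_on_joined_mem[OF m, of i j] ij short by (auto simp: joined_def)
  then obtain c where c: "joined a (Suc i) c" using matching_on_partner[OF m] by blast
  have ij': "joined a i j" "joined a j i" using ij by (auto simp: joined_def)
  have "c \<noteq> i" using matching_on_partner_unique[OF m ij'(1)] c joined_sym short by fastforce
  have "c \<noteq> j" using matching_on_partner_unique[OF m ij'(2)] c joined_sym by fastforce
  show ?thesis
  proof (cases "(Suc i, c) \<in> a")
    case True
    then have "c < j" using nc[OF ij True] \<open>c \<noteq> j\<close> short by fastforce
    then show ?thesis using True by blast
  next
    case False
    then have ci: "(c, Suc i) \<in> a" using c by (simp add: joined_def)
    then have "c < i" using matching_on_less[OF m ci] \<open>c \<noteq> i\<close> by simp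
    then show ?thesis using nc[OF ci ij] short by simp
  qed
qed

lemma D_Suc_short_arc:
  assumes a: "a \<in> D (Suc n)"
  shows "\<exists>k. (k, Suc k) \<in> a"
proof -
  have "\<exists>k. (k, Suc k) \<in> a" if "(i, j) \<in> a" "j - i = d" for d i j
    using that
  proof (induction d arbitrary: i j rule: less_induct)
    case (less d)
    show ?case
    proof (cases "Suc i < j")
      case True
      then obtain i' j' where "(i', j') \<in> a" "i < i'" "j' < j"
        using D_arc_inside[OF a less.prems(1)] by blast
      moreover have "i' < j'" using matching_on_less[OF matching_on_D[OF a]] calculation(1) .
      ultimately show ?thesis using less.IH[of "j' - i'"] less.prems(2) by auto
    next
      case False
      moreover have "i < j" using matching_on_less[OF matching_on_D[OF a] less.prems(1)] .
      ultimately have "j = Suc i" by simp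
      then show ?thesis using less.prems(1) by blast
    qed
  qed
  moreover obtain v where "joined a 1 v"
    using matching_on_partner[OF matching_on_D[OF a]] by fastforce
  ultimately show ?thesis unfolding joined_def by blast
qed

lemma kmin_mem: "a \<in> D (Suc n) \<Longrightarrow> (kmin a, Suc (kmin a)) \<in> a"
  unfolding kmin_def using D_Suc_short_arc by (rule LeastI_ex)

lemma kmin_le: "(k, Suc k) \<in> a \<Longrightarrow> kmin a \<le> k"
  unfolding kmin_def by (rule Least_le)

lemma kmin_bounds: "a \<in> D (Suc n) \<Longrightarrow> 1 \<le> kmin a \<and> kmin a \<le> 2*n+1"
proof -
  assume a: "a \<in> D (Suc n)"
  have "joined a (kmin a) (Suc (kmin a))" using kmin_mem[OF a] by (simp add: joined_def)
  then show ?thesis using matching_on_joined_mem[OF matching_on_D[OF a]] by auto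
qed

lemma short_arc_disjoint:
  assumes m: "matching_on S a" and k: "(k, Suc k) \<in> a" and uv: "(u, v) \<in> a" "(u, v) \<noteq> (k, Suc k)"
  shows "u \<notin> {k, Suc k} \<and> v \<notin> {k, Suc k}"
proof -
  note unique = matching_on_partner_unique[OF m]
  have kk: "joined a k (Suc k)" "joined a (Suc k) k" and uv': "joined a u v" "joined a v u"
    using k uv by (auto simp: joined_def)
  have "u \<noteq> k" using unique[OF kk(1)] uv' uv by blast
  moreover have "u \<noteq> Suc k" using unique[OF kk(2)] uv' uv matching_on_less[OF m uv(1)] by fastforce
  moreover have "v \<noteq> k" using unique[OF kk(1)] uv' uv matching_on_less[OF m uv(1)] by fastforce
  moreover have "v \<noteq> Suc k" using unique[OF kk(2)] uv' uv by blast
  ultimately show ?thesis by blast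
qed

lemma mem_remove_arc_iff:
  assumes m: "matching_on S a" and k: "(k, Suc k) \<in> a"
  shows "(u, v) \<in> remove_arc a k \<longleftrightarrow> (shift_up k u, shift_up k v) \<in> a"
proof
  assume "(u, v) \<in> remove_arc a k"
  then obtain i j where ij: "(i, j) \<in> a" "(i, j) \<noteq> (k, Suc k)"
    "u = shift_down k i" "v = shift_down k j"
    unfolding remove_arc_def shift_down_def by auto
  then have "i \<notin> {k, Suc k}" "j \<notin> {k, Suc k}" using short_arc_disjoint[OF m k] by auto
  then show "(shift_up k u, shift_up k v) \<in> a" using ij by simp
next
  assume "(shift_up k u, shift_up k v) \<in> a"
  then have "(shift_up k u, shift_up k v) \<in> a - {(k, Suc k)}" by simp
  then have "(shift_down k (shift_up k u), shift_down k (shift_up k v)) \<in> remove_arc a k"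
    unfolding remove_arc_def shift_down_def by force
  then show "(u, v) \<in> remove_arc a k" by simp
qed

lemma remove_arc_in_D:
  assumes a: "a \<in> D (Suc n)" and k: "(k, Suc k) \<in> a"
  shows "remove_arc a k \<in> D n"
proof -
  note m = matching_on_D[OF a]
  note unique = matching_on_partner_unique[OF m]
  have k_bounds: "1 \<le> k" "k \<le> 2*n+1"
    using matching_on_joined_mem[OF m, of k "Suc k"] k by (auto simp: joined_def)
  have joined_iff: "joined (remove_arc a k) u v \<longleftrightarrow> joined a (shift_up k u) (shift_up k v)" for u v
    unfolding joined_def using mem_remove_arc_iff[OF m k] by blast
  have "matching_on {1..2*n} (remove_arc a k)"
  proof (rule matching_onI)
    show "u < v" if "(u, v) \<in> remove_arc a k" for u v
      using that mem_remove_arc_iff[OF m k] matching_on_less[OF m] by fastforce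
    show "u \<in> {1..2*n}" if "joined (remove_arc a k) u v" for u v
      using that joined_iff matching_on_joined_mem[OF m] shift_up_in_pointsD k_bounds by blast
    show "\<exists>v. joined (remove_arc a k) u v" if u: "u \<in> {1..2*n}" for u
    proof -
      obtain w where w: "joined a (shift_up k u) w"
        using matching_on_partner[OF m shift_up_in_points[OF u k_bounds]] by blast
      have "joined a k (Suc k)" "joined a (Suc k) k" using k by (auto simp: joined_def)
      then have "w \<noteq> k" "w \<noteq> Suc k"
        using w unique[of k] unique[of "Suc k"] joined_sym shift_up_neq by metis+
      then have "joined (remove_arc a k) u (shift_down k w)" using joined_iff w by simp
      then show ?thesis by blast
    qed
    show "v = w" if "joined (remove_arc a k) u v" "joined (remove_arc a k) u w" for u v w
    proof -
      have "shift_up k v = shift_up k w" using that joined_iff unique by blast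
      then show ?thesis by simp
    qed
  qed
  moreover have "noncrossing (remove_arc a k)"
    unfolding noncrossing_def
  proof clarify
    fix i j i' j'
    assume "(i, j) \<in> remove_arc a k" "(i', j') \<in> remove_arc a k" "i < i'" "i' < j" "j < j'"
    then have "(shift_up k i, shift_up k j) \<in> a" "(shift_up k i', shift_up k j') \<in> a"
      "shift_up k i < shift_up k i'" "shift_up k i' < shift_up k j" "shift_up k j < shift_up k j'"
      using mem_remove_arc_iff[OF m k] by auto
    then show False using a unfolding D_eq noncrossing_def by blast
  qed
  ultimately show ?thesis by (simp add: D_eq matchings_def)
qed

lemma l_remove_arc:
  assumes a: "a \<in> D (Suc n)" and k: "(k, Suc k) \<in> a"
  shows "l k (remove_arc a k) = a"
proof (intro set_eqI, clarify)
  note m = matching_on_D[OF a]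
  fix u v
  show "(u, v) \<in> l k (remove_arc a k) \<longleftrightarrow> (u, v) \<in> a"
  proof (cases "(u, v) = (k, Suc k)")
    case False
    have "(u, v) \<in> l k (remove_arc a k) \<longleftrightarrow> u \<notin> {k, Suc k} \<and> v \<notin> {k, Suc k} \<and> (u, v) \<in> a"
      unfolding mem_l_iff mem_remove_arc_iff[OF m k] using False by auto
    then show ?thesis using short_arc_disjoint[OF m k _ False] by blast
  qed (use k mem_l_iff in auto)
qed

lemma length_rseq: "length (rseq n a) = n"
  by (induction n arbitrary: a) auto

text \<open>The first new arc cannot start more than one place to the right of the next one: otherwise
  the latter would be an arc \<open>(k, k + 1)\<close> of the diagram further left.\<close>
lemma kmin_le_Suc_kmin_remove_arc:
  assumes a: "a \<in> D (Suc (Suc n))"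
  shows "kmin a \<le> Suc (kmin (remove_arc a (kmin a)))"
proof (rule ccontr)
  let ?k = "kmin a" and ?a' = "remove_arc a (kmin a)"
  assume "\<not> ?thesis"
  then have lt: "Suc (kmin ?a') < ?k" by simp
  have "?a' \<in> D (Suc n)" using remove_arc_in_D[OF a kmin_mem[OF a]] .
  then have "(kmin ?a', Suc (kmin ?a')) \<in> l ?k ?a'"
    using kmin_mem lt by (simp add: mem_l_iff shift_down_def)
  then have "(kmin ?a', Suc (kmin ?a')) \<in> a" using l_remove_arc[OF a kmin_mem[OF a]] by simp
  then show False using kmin_le lt by fastforce
qed

lemma restricted_rseq: "a \<in> D (Suc n) \<Longrightarrow> restricted (rseq (Suc n) a)"
proof (induction n arbitrary: a)
  case 0
  then show ?case using kmin_bounds[OF 0] by simp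
next
  case (Suc n)
  let ?a' = "remove_arc a (kmin a)"
  have "?a' \<in> D (Suc n)" using remove_arc_in_D[OF Suc.prems kmin_mem[OF Suc.prems]] .
  then show ?case
    using Suc.IH kmin_bounds[OF Suc.prems] kmin_le_Suc_kmin_remove_arc[OF Suc.prems] by simp
qed

lemma inj_on_rseq: "inj_on (rseq n) (D n)"
proof (induction n)
  case 0
  show ?case by (rule inj_onI) (simp add: D_def)
next
  case (Suc n)
  show ?case
  proof (rule inj_onI)
    fix a b assume a: "a \<in> D (Suc n)" and b: "b \<in> D (Suc n)"
      and "rseq (Suc n) a = rseq (Suc n) b"
    then have k: "kmin a = kmin b"
      and r: "rseq n (remove_arc a (kmin a)) = rseq n (remove_arc b (kmin b))" by auto
    have "remove_arc a (kmin a) = remove_arc b (kmin b)"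
      using inj_onD[OF Suc.IH r] remove_arc_in_D[OF a kmin_mem[OF a]]
        remove_arc_in_D[OF b kmin_mem[OF b]] by blast
    then show "a = b"
      using k l_remove_arc[OF a kmin_mem[OF a]] l_remove_arc[OF b kmin_mem[OF b]] by metis
  qed
qed

lemma RS_restricted: "1 \<le> n \<Longrightarrow> as \<in> RS n \<Longrightarrow> restricted as \<and> length as = n"
  unfolding RS_def using restricted_rseq length_rseq by (cases n) auto

lemma card_RS: "card (RS n) = card (D n)"
  unfolding RS_def using card_image[OF inj_on_rseq] .

lemma finite_RS: "finite (RS n)"
  unfolding RS_def using finite_D by simp

section \<open>The basis\<close>

lemma sum_apply: "(\<Sum>i\<in>A. f i) x = (\<Sum>i\<in>A. f i x)"
  for f :: "'i \<Rightarrow> 'a \<Rightarrow> 'b::comm_monoid_add"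
  by (induction A rule: infinite_finite_induct) auto

interpretation vs: vector_space "\<lambda>(c::K) (v::vec). (\<lambda>x. c * v x)"
  by unfold_locales (simp_all add: fun_eq_iff algebra_simps)

context
  fixes n :: nat
  assumes n: "1 \<le> n"
begin

lemma markov_ep_ep_RS:
  "\<alpha> \<in> RS n \<Longrightarrow> \<beta> \<in> RS n \<Longrightarrow>
     markov n (ep \<alpha>) (ep \<beta>) = (if \<alpha> = \<beta> then (\<Prod>a\<leftarrow>\<alpha>. Delta a / Delta (a - 1)) else 0)"
  using markov_ep_ep RS_restricted[OF n] by metis

lemma markov_ep_self_nonzero:
  assumes "\<alpha> \<in> RS n"
  shows "markov n (ep \<alpha>) (ep \<alpha>) \<noteq> 0"
proof -
  have "(\<Prod>a\<leftarrow>\<alpha>. Delta a / Delta (a - 1)) \<noteq> 0"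
    unfolding prod_list_zero_iff using Delta_nonzero by auto
  then show ?thesis using markov_ep_ep_RS[OF assms assms] by simp
qed

lemma markov_ep_sum:
  assumes \<alpha>: "\<alpha> \<in> RS n"
  shows "markov n (ep \<alpha>) (\<lambda>b. \<Sum>\<beta>\<in>RS n. c \<beta> * ep \<beta> b) = c \<alpha> * markov n (ep \<alpha>) (ep \<alpha>)"
proof -
  have "markov n (ep \<alpha>) (\<lambda>b. \<Sum>\<beta>\<in>RS n. c \<beta> * ep \<beta> b)
      = (\<Sum>\<beta>\<in>RS n. c \<beta> * (\<Sum>b\<in>D n. ep \<beta> b * markov_at n (ep \<alpha>) b))"
    by (simp add: markov_eq_sum_markov_at sum_distrib_right sum_distrib_left mult_ac
        sum.swap[of _ "D n"])
  also have "\<dots> = (\<Sum>\<beta>\<in>RS n. c \<beta> * markov n (ep \<alpha>) (ep \<beta>))"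
    by (simp add: markov_eq_sum_markov_at)
  also have "\<dots> = (\<Sum>\<beta>\<in>RS n. if \<beta> = \<alpha> then c \<alpha> * markov n (ep \<alpha>) (ep \<alpha>) else 0)"
  proof (intro sum.cong refl)
    fix \<beta> assume "\<beta> \<in> RS n"
    then show "c \<beta> * markov n (ep \<alpha>) (ep \<beta>) = (if \<beta> = \<alpha> then c \<alpha> * markov n (ep \<alpha>) (ep \<alpha>) else 0)"
      using markov_ep_ep_RS[OF \<alpha>, of \<beta>] by (cases "\<beta> = \<alpha>") auto
  qed
  also have "\<dots> = c \<alpha> * markov n (ep \<alpha>) (ep \<alpha>)" using \<alpha> by (simp add: finite_RS)
  finally show ?thesis .
qed

lemma ep_coefficients_unique:
  assumes "\<alpha> \<in> RS n" "(\<lambda>b. \<Sum>\<beta>\<in>RS n. c \<beta> * ep \<beta> b) = (\<lambda>b. \<Sum>\<beta>\<in>RS n. d \<beta> * ep \<beta> b)"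
  shows "c \<alpha> = d \<alpha>"
  using markov_ep_sum[OF assms(1), of c] markov_ep_sum[OF assms(1), of d] assms(2)
    markov_ep_self_nonzero[OF assms(1)]
  by simp

lemma inj_on_ep: "inj_on ep (RS n)"
proof (rule inj_onI, rule ccontr)
  fix \<alpha> \<beta> assume "\<alpha> \<in> RS n" "\<beta> \<in> RS n" "ep \<alpha> = ep \<beta>" "\<alpha> \<noteq> \<beta>"
  then show False using markov_ep_ep_RS[of \<alpha> \<beta>] markov_ep_self_nonzero[of \<alpha>] by simp
qed

lemma sum_ep_image:
  "(\<Sum>e\<in>ep ` RS n. (\<lambda>x. u e * e x)) = (\<lambda>b. \<Sum>\<alpha>\<in>RS n. u (ep \<alpha>) * ep \<alpha> b)"
  by (simp add: fun_eq_iff sum_apply sum.reindex[OF inj_on_ep])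

lemma independent_ep: "vs.independent (ep ` RS n)"
proof (rule vs.independent_if_scalars_zero)
  show "finite (ep ` RS n)" using finite_RS by simp
  fix u e assume "(\<Sum>e\<in>ep ` RS n. (\<lambda>x. u e * e x)) = 0" and e: "e \<in> ep ` RS n"
  then have "(\<lambda>b. \<Sum>\<alpha>\<in>RS n. u (ep \<alpha>) * ep \<alpha> b) = (\<lambda>b. \<Sum>\<alpha>\<in>RS n. 0 * ep \<alpha> b)"
    by (simp add: sum_ep_image zero_fun_def)
  then show "u e = 0" using ep_coefficients_unique[of _ "\<lambda>\<alpha>. u (ep \<alpha>)" "\<lambda>_. 0"] e by auto
qed

lemma span_delta: "(\<forall>b. b \<notin> D n \<longrightarrow> v b = 0) \<Longrightarrow> v \<in> vs.span (delta ` D n)"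
proof -
  assume v: "\<forall>b. b \<notin> D n \<longrightarrow> v b = 0"
  have "v = (\<Sum>b\<in>D n. (\<lambda>x. v b * delta b x))"
  proof
    fix x
    have "(\<Sum>b\<in>D n. (\<lambda>x. v b * delta b x)) x = (\<Sum>b\<in>D n. if b = x then v b else 0)"
      unfolding sum_apply by (intro sum.cong refl) (auto simp: delta_def)
    also have "\<dots> = v x" using v by (simp add: finite_D)
    finally show "v x = (\<Sum>b\<in>D n. (\<lambda>x. v b * delta b x)) x" by simp
  qed
  also have "\<dots> \<in> vs.span (delta ` D n)"
    by (intro vs.span_sum vs.span_scale vs.span_base) auto
  finally show ?thesis .
qed

text \<open>Spanning is a dimension count: \<open>rseq\<close> is a bijection from \<open>D n\<close> onto \<open>RS n\<close>.\<close>
lemma span_ep: "(\<forall>b. b \<notin> D n \<longrightarrow> v b = 0) \<Longrightarrow> v \<in> vs.span (ep ` RS n)"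
proof (rule ccontr)
  assume v: "\<forall>b. b \<notin> D n \<longrightarrow> v b = 0" and notin: "v \<notin> vs.span (ep ` RS n)"
  have "insert v (ep ` RS n) \<subseteq> vs.span (delta ` D n)"
    using span_delta v ep_eq_0 RS_restricted[OF n] by auto
  then have "vs.dim (insert v (ep ` RS n)) \<le> card (delta ` D n)"
    using vs.dim_le_card finite_D by blast
  then have "card (insert v (ep ` RS n)) \<le> card (delta ` D n)"
    using vs.dim_eq_card_independent[OF vs.independent_insertI[OF notin independent_ep]] by simp
  also have "\<dots> \<le> card (ep ` RS n)"
    using card_image_le[OF finite_D] card_RS card_image[OF inj_on_ep] by simp
  finally have "card (insert v (ep ` RS n)) \<le> card (ep ` RS n)" .
  moreover have "v \<notin> ep ` RS n" using notin vs.span_base by blast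
  ultimately show False using finite_RS by simp
qed

lemma ep_basis:
  assumes v: "\<forall>b. b \<notin> D n \<longrightarrow> v b = 0"
  shows "\<exists>!c :: nat list \<Rightarrow> K. (\<forall>\<alpha>. \<alpha> \<notin> RS n \<longrightarrow> c \<alpha> = 0) \<and> v = (\<lambda>b. \<Sum>\<alpha>\<in>RS n. c \<alpha> * ep \<alpha> b)"
proof -
  obtain u where u: "v = (\<Sum>e\<in>ep ` RS n. (\<lambda>x. u e * e x))"
    using span_ep[OF v] vs.span_finite[of "ep ` RS n"] finite_RS by auto
  define c where "c \<alpha> = (if \<alpha> \<in> RS n then u (ep \<alpha>) else 0)" for \<alpha>
  have c: "v = (\<lambda>b. \<Sum>\<alpha>\<in>RS n. c \<alpha> * ep \<alpha> b)"
    unfolding u sum_ep_image c_def by (intro ext sum.cong refl) simp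
  show ?thesis
  proof (rule ex1I[of _ c])
    show "(\<forall>\<alpha>. \<alpha> \<notin> RS n \<longrightarrow> c \<alpha> = 0) \<and> v = (\<lambda>b. \<Sum>\<alpha>\<in>RS n. c \<alpha> * ep \<alpha> b)"
      using c by (simp add: c_def)
    fix d assume d: "(\<forall>\<alpha>. \<alpha> \<notin> RS n \<longrightarrow> d \<alpha> = 0) \<and> v = (\<lambda>b. \<Sum>\<alpha>\<in>RS n. d \<alpha> * ep \<alpha> b)"
    show "d = c"
    proof
      fix \<alpha>
      show "d \<alpha> = c \<alpha>"
      proof (cases "\<alpha> \<in> RS n")
        case True
        then show ?thesis using ep_coefficients_unique[OF True, of d c] d c by simp
      qed (use d c_def in simp)
    qed
  qed
qed

end

theorem mainTheorem1:
  fixes n :: nat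
  assumes "n \<ge> 1"
  shows "(\<forall>\<alpha>\<in>RS n. \<forall>\<beta>. \<beta> \<notin> D n \<longrightarrow> ep \<alpha> \<beta> = 0)
       \<and> (\<forall>v :: vec. (\<forall>\<beta>. \<beta> \<notin> D n \<longrightarrow> v \<beta> = 0) \<longrightarrow>
            (\<exists>!c :: nat list \<Rightarrow> K. (\<forall>\<alpha>. \<alpha> \<notin> RS n \<longrightarrow> c \<alpha> = 0)
                 \<and> v = (\<lambda>\<beta>. \<Sum>\<alpha>\<in>RS n. c \<alpha> * ep \<alpha> \<beta>)))
       \<and> (\<forall>\<alpha>\<in>RS n. markov n (ep \<alpha>) (ep \<alpha>) = (\<Prod>a\<leftarrow>\<alpha>. Delta a / Delta (a - 1)))
       \<and> (\<forall>\<alpha>\<in>RS n. \<forall>\<beta>\<in>RS n. \<beta> \<noteq> \<alpha> \<longrightarrow> markov n (ep \<beta>) (ep \<alpha>) = 0)"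
  using ep_eq_0 RS_restricted[OF assms] ep_basis[OF assms] markov_ep_ep_RS[OF assms] by auto

end
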